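(* Let $k,k'\ge1$ be integers. For $X\in\mathcal{P}$ let $\mathcal{C}^{-1}(X)=\{(P,Q)\in\mathcal{P}^2:[P,Q]\in\{2iX,-2iX\}\}$ and $\mathcal{S}_X=\mathcal{C}^{-1}(X)\cap(\mathcal{P}_k\times\mathcal{P}_{k'})$. For $(P,Q)\in\mathcal{S}_X$ define its type as $(|\mathrm{supp}(P)|,|\mathrm{supp}(P)\cap\mathrm{supp}(Q)|)$, and let $\mathcal{S}_X[j,l]$ be the set of elements of $\mathcal{S}_X$ of type $(j,l)$. Then: (a) for every $X\in\mathcal{P}$ there are at most $k^2$ distinct types among elements of $\mathcal{S}_X$; (b) if $(P,Q),(P',Q')\in\mathcal{S}_X[j,l]$, then $\mathrm{supp}(P)\cap\mathrm{supp}(Q')\neq\varnothing$.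
   Context: $\mathcal{P}$ denotes the set of $n$-fold tensor products of Pauli matrices $\{I,\sigma_x,\sigma_y,\sigma_z\}$; $\mathrm{supp}(P)\subseteq[n]$ is the set of qubits on which $P$ acts non-trivially; $\mathcal{P}_j$ is the set of Paulis with $|\mathrm{supp}|\le j$. $[A,B]=AB-BA$. *)

theory Defs
  imports Complex_Main "Jordan_Normal_Form.Matrix"
begin

datatype pauli1 = PI | PX | PY | PZ

definition pmat1 :: "pauli1 \<Rightarrow> complex mat" where
  "pmat1 a = (case a of
      PI \<Rightarrow> mat_of_rows_list 2 [[1, 0], [0, 1]]
    | PX \<Rightarrow> mat_of_rows_list 2 [[0, 1], [1, 0]]
    | PY \<Rightarrow> mat_of_rows_list 2 [[0, -\<i>], [\<i>, 0]]
    | PZ \<Rightarrow> mat_of_rows_list 2 [[1, 0], [0, -1]])"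

definition kron :: "complex mat \<Rightarrow> complex mat \<Rightarrow> complex mat" where
  "kron A B = mat (dim_row A * dim_row B) (dim_col A * dim_col B)
     (\<lambda>(i, j). A $$ (i div dim_row B, j div dim_col B) * B $$ (i mod dim_row B, j mod dim_col B))"

definition pauli_mat :: "pauli1 list \<Rightarrow> complex mat" where
  "pauli_mat ps = foldr (\<lambda>a M. kron (pmat1 a) M) ps (1\<^sub>m 1)"

text \<open>The set of n-qubit Pauli strings (the set P), represented by their labels.\<close>
definition paulis :: "nat \<Rightarrow> pauli1 list set" where
  "paulis n = {ps. length ps = n}"

definition supp :: "pauli1 list \<Rightarrow> nat set" where
  "supp ps = {i. i < length ps \<and> ps ! i \<noteq> PI}"

definition paulis_le :: "nat \<Rightarrow> nat \<Rightarrow> pauli1 list set" where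
  "paulis_le n j = {ps \<in> paulis n. card (supp ps) \<le> j}"

definition commutator :: "complex mat \<Rightarrow> complex mat \<Rightarrow> complex mat" where
  "commutator A B = A * B - B * A"

definition C_inv :: "nat \<Rightarrow> pauli1 list \<Rightarrow> (pauli1 list \<times> pauli1 list) set" where
  "C_inv n X = {(P, Q). P \<in> paulis n \<and> Q \<in> paulis n \<and>
     commutator (pauli_mat P) (pauli_mat Q) \<in>
       {(2 * \<i>) \<cdot>\<^sub>m pauli_mat X, (- 2 * \<i>) \<cdot>\<^sub>m pauli_mat X}}"

definition S_X :: "nat \<Rightarrow> nat \<Rightarrow> nat \<Rightarrow> pauli1 list \<Rightarrow> (pauli1 list \<times> pauli1 list) set" where
  "S_X n k k' X = C_inv n X \<inter> (paulis_le n k \<times> paulis_le n k')"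

definition ptype :: "pauli1 list \<times> pauli1 list \<Rightarrow> nat \<times> nat" where
  "ptype pq = (card (supp (fst pq)), card (supp (fst pq) \<inter> supp (snd pq)))"

definition S_X_type :: "nat \<Rightarrow> nat \<Rightarrow> nat \<Rightarrow> pauli1 list \<Rightarrow> nat \<Rightarrow> nat \<Rightarrow> (pauli1 list \<times> pauli1 list) set" where
  "S_X_type n k k' X j l = {pq \<in> S_X n k k' X. ptype pq = (j, l)}"

end

theory Submission
  imports Defs
begin

text \<open>
  Site by site, the product of two Pauli strings is a phase times a Pauli string, and the phases
  of P Q and Q P agree unless some site anticommutes. Hence [P, Q] is a multiple of the string
  P Q, nonzero only if some site anticommutes; as distinct Pauli strings are never proportional,
  [P, Q] = \<plusminus>2iX forces P Q = X sitewise with an anticommuting site, which lies in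
  supp P \<inter> supp Q. This gives (a). For (b), if supp P \<inter> supp Q' = {} then Q' is the identity on
  supp P, so P' = X there. The sites of supp P - supp Q and the anticommuting site of (P, Q) all
  carry a non-identity letter of X, so they lie in supp P' - supp Q', which is impossible because
  both difference sets have j - l elements.
\<close>

lemma div_mod_less_of_less_mult: "(i :: nat) < a * b \<Longrightarrow> i div b < a \<and> i mod b < b"
  by (metis less_mult_imp_div_less gr_zeroI mod_less_divisor mult_0_right not_less_zero)

lemma sum_lessThan_mult_div_mod:
  fixes f :: "nat \<Rightarrow> nat \<Rightarrow> 'a::comm_monoid_add"
  shows "(\<Sum>w<p * q. f (w div q) (w mod q)) = (\<Sum>u<p. \<Sum>v<q. f u v)"
proof -
  have "bij_betw (\<lambda>w. (w div q, w mod q)) {..<p * q} ({..<p} \<times> {..<q})"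
  proof (rule bij_betwI[where g = "\<lambda>(u, v). u * q + v"])
    show "(\<lambda>(u, v). u * q + v) \<in> {..<p} \<times> {..<q} \<rightarrow> {..<p * q}"
    proof safe
      fix u v assume "u < p" "v < q"
      then have "u * q + v < (u + 1) * q" by simp
      also have "\<dots> \<le> p * q" using \<open>u < p\<close> by (intro mult_right_mono) auto
      finally show "u * q + v < p * q" .
    qed
  qed (auto dest: div_mod_less_of_less_mult)
  then show ?thesis
    by (simp add: sum.reindex_bij_betw[symmetric] sum.cartesian_product)
qed

lemma mult_kron:
  assumes "A \<in> carrier_mat p p" "C \<in> carrier_mat p p" "B \<in> carrier_mat q q" "D \<in> carrier_mat q q"
  shows "kron A B * kron C D = kron (A * C) (B * D)"
proof (rule eq_matI)
  fix i j assume "i < dim_row (kron (A * C) (B * D))" "j < dim_col (kron (A * C) (B * D))"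
  then have ij: "i < p * q" "j < p * q" using assms by (auto simp: kron_def)
  then have div_mod: "i div q < p" "j div q < p" "i mod q < q" "j mod q < q"
    by (simp_all add: div_mod_less_of_less_mult)
  have "(kron A B * kron C D) $$ (i, j) = (\<Sum>w<p * q. kron A B $$ (i, w) * kron C D $$ (w, j))"
    using assms ij by (simp add: kron_def scalar_prod_def times_mat_def atLeast0LessThan)
  also have "\<dots> = (\<Sum>w<p * q. (A $$ (i div q, w div q) * C $$ (w div q, j div q)) *
                                (B $$ (i mod q, w mod q) * D $$ (w mod q, j mod q)))"
    using assms ij by (intro sum.cong) (auto simp: kron_def)
  also have "\<dots> = (\<Sum>u<p. \<Sum>v<q. (A $$ (i div q, u) * C $$ (u, j div q)) *
                                  (B $$ (i mod q, v) * D $$ (v, j mod q)))"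
    by (rule sum_lessThan_mult_div_mod)
  also have "\<dots> = (\<Sum>u<p. A $$ (i div q, u) * C $$ (u, j div q)) *
                  (\<Sum>v<q. B $$ (i mod q, v) * D $$ (v, j mod q))"
    by (simp add: sum_product)
  also have "\<dots> = kron (A * C) (B * D) $$ (i, j)"
    using assms ij div_mod by (simp add: kron_def scalar_prod_def times_mat_def atLeast0LessThan)
  finally show "(kron A B * kron C D) $$ (i, j) = kron (A * C) (B * D) $$ (i, j)" .
qed (use assms in \<open>simp_all add: kron_def\<close>)

lemma kron_smult_mat: "kron (a \<cdot>\<^sub>m A) (b \<cdot>\<^sub>m B) = (a * b) \<cdot>\<^sub>m kron A B"
proof (rule eq_matI)
  fix i j assume "i < dim_row ((a * b) \<cdot>\<^sub>m kron A B)" "j < dim_col ((a * b) \<cdot>\<^sub>m kron A B)"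
  then have "i div dim_row B < dim_row A" "j div dim_col B < dim_col A"
    "i mod dim_row B < dim_row B" "j mod dim_col B < dim_col B"
    by (simp_all add: kron_def div_mod_less_of_less_mult)
  then show "kron (a \<cdot>\<^sub>m A) (b \<cdot>\<^sub>m B) $$ (i, j) = ((a * b) \<cdot>\<^sub>m kron A B) $$ (i, j)"
    using \<open>i < _\<close> \<open>j < _\<close> by (simp add: kron_def)
qed (simp_all add: kron_def)

lemma kron_one_mat: "kron (1\<^sub>m p) (1\<^sub>m q) = 1\<^sub>m (p * q)"
proof (rule eq_matI)
  fix i j assume "i < dim_row (1\<^sub>m (p * q))" "j < dim_col (1\<^sub>m (p * q))"
  then have ij: "i < p * q" "j < p * q" by auto
  then have "i div q < p" "j div q < p" "i mod q < q" by (simp_all add: div_mod_less_of_less_mult)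
  moreover have "(i div q = j div q \<and> i mod q = j mod q) \<longleftrightarrow> i = j" by (metis div_mult_mod_eq)
  ultimately show "kron (1\<^sub>m p) (1\<^sub>m q) $$ (i, j) = 1\<^sub>m (p * q) $$ (i, j)"
    using ij by (auto simp: kron_def)
qed (simp_all add: kron_def)

lemma one_smult_mat: "1 \<cdot>\<^sub>m (A :: 'a::monoid_mult mat) = A"
  by (rule eq_matI) auto

lemma smult_smult_mat: "a \<cdot>\<^sub>m (b \<cdot>\<^sub>m (A :: 'a::semigroup_mult mat)) = (a * b) \<cdot>\<^sub>m A"
  by (rule eq_matI) (auto simp: mult.assoc)

fun pauli1_prod :: "pauli1 \<Rightarrow> pauli1 \<Rightarrow> pauli1" where
  "pauli1_prod PI b = b"
| "pauli1_prod a PI = a"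
| "pauli1_prod PX PX = PI" | "pauli1_prod PX PY = PZ" | "pauli1_prod PX PZ = PY"
| "pauli1_prod PY PX = PZ" | "pauli1_prod PY PY = PI" | "pauli1_prod PY PZ = PX"
| "pauli1_prod PZ PX = PY" | "pauli1_prod PZ PY = PX" | "pauli1_prod PZ PZ = PI"

fun pauli1_phase :: "pauli1 \<Rightarrow> pauli1 \<Rightarrow> complex" where
  "pauli1_phase PX PY = \<i>" | "pauli1_phase PY PX = - \<i>"
| "pauli1_phase PY PZ = \<i>" | "pauli1_phase PZ PY = - \<i>"
| "pauli1_phase PZ PX = \<i>" | "pauli1_phase PX PZ = - \<i>"
| "pauli1_phase _ _ = 1"

definition anticommute1 :: "pauli1 \<Rightarrow> pauli1 \<Rightarrow> bool" where
  "anticommute1 a b \<longleftrightarrow> a \<noteq> PI \<and> b \<noteq> PI \<and> a \<noteq> b"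

lemma pauli1_prod_commute: "pauli1_prod a b = pauli1_prod b a"
  by (cases a; cases b) auto

lemma pauli1_prod_eq_PI_iff: "pauli1_prod a b = PI \<longleftrightarrow> a = b"
  by (cases a; cases b) auto

lemma pauli1_phase_nonzero: "pauli1_phase a b \<noteq> 0"
  by (cases a; cases b) auto

lemma pauli1_phase_commute: "\<not> anticommute1 a b \<Longrightarrow> pauli1_phase b a = pauli1_phase a b"
  by (cases a; cases b) (auto simp: anticommute1_def)

lemma pauli1_phase_anticommute: "anticommute1 a b \<Longrightarrow> pauli1_phase b a = - pauli1_phase a b"
  by (cases a; cases b) (auto simp: anticommute1_def)

lemma pauli1_phase_PI: "pauli1_phase a PI = 1" "pauli1_phase PI a = 1"
  by (cases a; simp)+

lemma ex_anticommute1: "a \<noteq> PI \<Longrightarrow> \<exists>b. anticommute1 a b"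
  by (cases a) (auto simp: anticommute1_def intro: exI[of _ PX] exI[of _ PY])

lemma pmat1_carrier: "pmat1 a \<in> carrier_mat 2 2"
  by (cases a) (auto simp: pmat1_def mat_of_rows_list_def)

lemma mat2_eqI:
  assumes "A \<in> carrier_mat 2 2" "B \<in> carrier_mat 2 2"
    "A $$ (0, 0) = B $$ (0, 0)" "A $$ (0, 1) = B $$ (0, 1)"
    "A $$ (1, 0) = B $$ (1, 0)" "A $$ (1, 1) = B $$ (1, 1)"
  shows "A = B"
proof (rule eq_matI)
  fix i j assume "i < dim_row B" "j < dim_col B"
  then have "i < 2" "j < 2" using assms by auto
  then show "A $$ (i, j) = B $$ (i, j)" using assms by (auto simp: less_2_cases_iff)
qed (use assms in auto)

lemma pmat1_mult: "pmat1 a * pmat1 b = pauli1_phase a b \<cdot>\<^sub>m pmat1 (pauli1_prod a b)"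
proof (rule mat2_eqI)
  have entry: "(pmat1 a * pmat1 b) $$ (i, j) =
      pmat1 a $$ (i, 0) * pmat1 b $$ (0, j) + pmat1 a $$ (i, 1) * pmat1 b $$ (1, j)"
    if "i < 2" "j < 2" for i j
    using that pmat1_carrier[of a] pmat1_carrier[of b]
    by (simp add: scalar_prod_def times_mat_def numeral_2_eq_2)
  show "(pmat1 a * pmat1 b) $$ (0, 0) = (pauli1_phase a b \<cdot>\<^sub>m pmat1 (pauli1_prod a b)) $$ (0, 0)"
    "(pmat1 a * pmat1 b) $$ (0, 1) = (pauli1_phase a b \<cdot>\<^sub>m pmat1 (pauli1_prod a b)) $$ (0, 1)"
    "(pmat1 a * pmat1 b) $$ (1, 0) = (pauli1_phase a b \<cdot>\<^sub>m pmat1 (pauli1_prod a b)) $$ (1, 0)"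
    "(pmat1 a * pmat1 b) $$ (1, 1) = (pauli1_phase a b \<cdot>\<^sub>m pmat1 (pauli1_prod a b)) $$ (1, 1)"
    by (simp_all add: entry) (cases a; cases b; simp add: pmat1_def mat_of_rows_list_def)+
qed (auto intro: mult_carrier_mat pmat1_carrier simp: pmat1_carrier)

lemma pmat1_PI: "pmat1 PI = 1\<^sub>m 2"
  by (rule mat2_eqI) (auto simp: pmat1_def mat_of_rows_list_def)

fun pauli_prod :: "pauli1 list \<Rightarrow> pauli1 list \<Rightarrow> pauli1 list" where
  "pauli_prod (a # P) (b # Q) = pauli1_prod a b # pauli_prod P Q"
| "pauli_prod _ _ = []"

fun pauli_phase :: "pauli1 list \<Rightarrow> pauli1 list \<Rightarrow> complex" where
  "pauli_phase (a # P) (b # Q) = pauli1_phase a b * pauli_phase P Q"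
| "pauli_phase _ _ = 1"

lemma length_pauli_prod: "length P = length Q \<Longrightarrow> length (pauli_prod P Q) = length P"
  by (induction P Q rule: pauli_prod.induct) auto

lemma nth_pauli_prod:
  "length P = length Q \<Longrightarrow> i < length P \<Longrightarrow> pauli_prod P Q ! i = pauli1_prod (P ! i) (Q ! i)"
  by (induction P Q arbitrary: i rule: pauli_prod.induct) (auto simp: nth_Cons split: nat.splits)

lemma pauli_prod_commute: "pauli_prod Q P = pauli_prod P Q"
  by (induction P Q rule: pauli_prod.induct) (auto simp: pauli1_prod_commute)

lemma pauli_prod_self: "pauli_prod P P = replicate (length P) PI"
  by (induction P) (auto simp: pauli1_prod_eq_PI_iff)

lemma pauli_phase_self: "pauli_phase P P = 1"
proof (induction P)
  case (Cons a P)
  then show ?case by (cases a) simp_all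
qed simp

lemma pauli_phase_nonzero: "pauli_phase P Q \<noteq> 0"
  by (induction P Q rule: pauli_phase.induct) (auto simp: pauli1_phase_nonzero)

lemma pauli_phase_commute:
  "length P = length Q \<Longrightarrow> \<forall>i<length P. \<not> anticommute1 (P ! i) (Q ! i) \<Longrightarrow>
    pauli_phase Q P = pauli_phase P Q"
proof (induction P Q rule: pauli_prod.induct)
  case (1 a P b Q)
  then have "\<not> anticommute1 a b" "\<forall>i<length P. \<not> anticommute1 (P ! i) (Q ! i)" by force+
  with 1 show ?case by (simp add: pauli1_phase_commute)
qed auto

lemma pauli_phase_replicate_PI:
  "pauli_phase R (replicate (length R) PI) = 1" "pauli_phase (replicate (length R) PI) R = 1"
  by (induction R) (simp_all add: pauli1_phase_PI)

lemma pauli_phase_single_site: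
  "length R = n \<Longrightarrow> t < n \<Longrightarrow>
    pauli_phase R ((replicate n PI)[t := b]) = pauli1_phase (R ! t) b \<and>
    pauli_phase ((replicate n PI)[t := b]) R = pauli1_phase b (R ! t)"
proof (induction R arbitrary: n t)
  case (Cons a R)
  then have "n = Suc (length R)" by simp
  with Cons show ?case by (cases t) (simp_all add: pauli_phase_replicate_PI pauli1_phase_PI)
qed simp

lemma pauli_mat_Cons: "pauli_mat (a # P) = kron (pmat1 a) (pauli_mat P)"
  by (simp add: pauli_mat_def)

lemma pauli_mat_carrier: "pauli_mat P \<in> carrier_mat (2 ^ length P) (2 ^ length P)"
  by (induction P) (auto simp: pauli_mat_def kron_def pmat1_carrier[THEN carrier_matD(1)]
      pmat1_carrier[THEN carrier_matD(2)])

lemma pauli_mat_mult: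
  "length P = length Q \<Longrightarrow>
    pauli_mat P * pauli_mat Q = pauli_phase P Q \<cdot>\<^sub>m pauli_mat (pauli_prod P Q)"
proof (induction P Q rule: pauli_prod.induct)
  case (1 a P b Q)
  then have IH: "pauli_mat P * pauli_mat Q = pauli_phase P Q \<cdot>\<^sub>m pauli_mat (pauli_prod P Q)"
    and "length P = length Q" by auto
  then have "pauli_mat (a # P) * pauli_mat (b # Q) =
      kron (pmat1 a * pmat1 b) (pauli_mat P * pauli_mat Q)"
    unfolding pauli_mat_Cons
    using mult_kron[of "pmat1 a" 2 "pmat1 b" "pauli_mat P" "2 ^ length P" "pauli_mat Q"]
      pmat1_carrier pauli_mat_carrier[of P] pauli_mat_carrier[of Q] by simp
  also have "\<dots> = pauli_phase (a # P) (b # Q) \<cdot>\<^sub>m pauli_mat (pauli_prod (a # P) (b # Q))"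
    by (simp add: IH pmat1_mult kron_smult_mat pauli_mat_Cons)
  finally show ?case .
qed (auto simp: pauli_mat_def one_smult_mat)

lemma pauli_mat_replicate_PI: "pauli_mat (replicate n PI) = 1\<^sub>m (2 ^ n)"
  by (induction n) (auto simp: pauli_mat_def pmat1_PI kron_one_mat)

lemma pauli_mat_square: "pauli_mat P * pauli_mat P = 1\<^sub>m (2 ^ length P)"
  by (simp add: pauli_mat_mult pauli_prod_self pauli_phase_self pauli_mat_replicate_PI one_smult_mat)

lemma smult_pauli_mat_cancel:
  assumes "c \<cdot>\<^sub>m pauli_mat X = d \<cdot>\<^sub>m pauli_mat X"
  shows "c = d"
proof -
  have "(c \<cdot>\<^sub>m pauli_mat X) * pauli_mat X = (d \<cdot>\<^sub>m pauli_mat X) * pauli_mat X"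
    using assms by simp
  then have "(c \<cdot>\<^sub>m 1\<^sub>m (2 ^ length X)) $$ (0, 0) =
      (d \<cdot>\<^sub>m (1\<^sub>m (2 ^ length X) :: complex mat)) $$ (0, 0)"
    by (simp add: mult_smult_assoc_mat[OF pauli_mat_carrier pauli_mat_carrier] pauli_mat_square)
  then show ?thesis by simp
qed

lemma pauli_mat_eq_smult_one_imp_PI:
  assumes W: "pauli_mat W = s \<cdot>\<^sub>m 1\<^sub>m (2 ^ length W)" and t: "t < length W"
  shows "W ! t = PI"
proof (rule ccontr)
  assume "W ! t \<noteq> PI"
  then obtain b where anti: "anticommute1 (W ! t) b" using ex_anticommute1 by blast
  define T where "T = (replicate (length W) PI)[t := b]"
  have "length T = length W" by (simp add: T_def)
  then have carrier: "pauli_mat T \<in> carrier_mat (2 ^ length W) (2 ^ length W)"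
    using pauli_mat_carrier[of T] by simp
  \<comment> \<open>a scalar matrix commutes with the single-site string T, which anticommutes with W\<close>
  have "pauli_mat W * pauli_mat T = s \<cdot>\<^sub>m pauli_mat T"
    using carrier by (simp add: W mult_smult_assoc_mat[OF one_carrier_mat carrier])
  also have "\<dots> = pauli_mat T * pauli_mat W"
    using carrier by (simp add: W mult_smult_distrib[OF carrier one_carrier_mat])
  finally have "pauli_mat W * pauli_mat T = pauli_mat T * pauli_mat W" .
  then have "pauli_phase W T \<cdot>\<^sub>m pauli_mat (pauli_prod W T) =
      pauli_phase T W \<cdot>\<^sub>m pauli_mat (pauli_prod W T)"
    using \<open>length T = length W\<close> by (simp add: pauli_mat_mult pauli_prod_commute[of T W])
  then have "pauli1_phase (W ! t) b = pauli1_phase b (W ! t)"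
    using smult_pauli_mat_cancel pauli_phase_single_site[of W "length W" t b] t by (simp add: T_def)
  then show False
    using pauli1_phase_anticommute[OF anti] pauli1_phase_nonzero[of "W ! t" b] by simp
qed

lemma pauli_mat_smult_inj:
  assumes len: "length R = length X" and "c \<noteq> 0"
    and eq: "c \<cdot>\<^sub>m pauli_mat R = d \<cdot>\<^sub>m pauli_mat X"
  shows "R = X"
proof -
  define e where "e = c * pauli_phase R X"
  have "e \<noteq> 0" using \<open>c \<noteq> 0\<close> pauli_phase_nonzero by (simp add: e_def)
  have "(c \<cdot>\<^sub>m pauli_mat R) * pauli_mat X = (d \<cdot>\<^sub>m pauli_mat X) * pauli_mat X"
    using eq by simp
  then have "e \<cdot>\<^sub>m pauli_mat (pauli_prod R X) = d \<cdot>\<^sub>m 1\<^sub>m (2 ^ length X)"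
    using len pauli_mat_carrier[of R] pauli_mat_carrier[of X]
    by (simp add: e_def mult_smult_assoc_mat pauli_mat_mult pauli_mat_square smult_smult_mat)
  then have "(1 / e) \<cdot>\<^sub>m (e \<cdot>\<^sub>m pauli_mat (pauli_prod R X)) =
      (1 / e) \<cdot>\<^sub>m (d \<cdot>\<^sub>m 1\<^sub>m (2 ^ length X))"
    by simp
  then have "pauli_mat (pauli_prod R X) = (d / e) \<cdot>\<^sub>m 1\<^sub>m (2 ^ length (pauli_prod R X))"
    using \<open>e \<noteq> 0\<close> len by (simp add: smult_smult_mat one_smult_mat length_pauli_prod)
  then have "pauli_prod R X ! t = PI" if "t < length R" for t
    using pauli_mat_eq_smult_one_imp_PI that len by (simp add: length_pauli_prod)
  then show ?thesis
    using len by (intro nth_equalityI) (simp_all add: nth_pauli_prod pauli1_prod_eq_PI_iff)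
qed

lemma commutator_pauli_mat:
  "length P = length Q \<Longrightarrow>
    commutator (pauli_mat P) (pauli_mat Q) =
      (pauli_phase P Q - pauli_phase Q P) \<cdot>\<^sub>m pauli_mat (pauli_prod P Q)"
  using pauli_mat_carrier[of "pauli_prod P Q"]
  by (auto simp: commutator_def pauli_mat_mult pauli_prod_commute[of Q P] algebra_simps intro!: eq_matI)

lemma C_invD:
  assumes PQ: "(P, Q) \<in> C_inv n X" and X: "X \<in> paulis n"
  shows "length P = n" "length Q = n" "pauli_prod P Q = X" "\<exists>i<n. anticommute1 (P ! i) (Q ! i)"
proof -
  show lengths: "length P = n" "length Q = n" using PQ by (auto simp: C_inv_def paulis_def)
  have "length X = n" using X by (simp add: paulis_def)
  obtain c where "c \<in> {2 * \<i>, - 2 * \<i>}"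
    and c: "commutator (pauli_mat P) (pauli_mat Q) = c \<cdot>\<^sub>m pauli_mat X"
    using PQ unfolding C_inv_def by blast
  then have "c \<noteq> 0" by auto
  from c have eq:
    "c \<cdot>\<^sub>m pauli_mat X = (pauli_phase P Q - pauli_phase Q P) \<cdot>\<^sub>m pauli_mat (pauli_prod P Q)"
    using lengths by (simp add: commutator_pauli_mat)
  show "pauli_prod P Q = X"
    using pauli_mat_smult_inj[OF _ \<open>c \<noteq> 0\<close> eq] lengths \<open>length X = n\<close>
    by (simp add: length_pauli_prod)
  show "\<exists>i<n. anticommute1 (P ! i) (Q ! i)"
  proof (rule ccontr)
    assume "\<not> ?thesis"
    then have "pauli_phase Q P = pauli_phase P Q" using pauli_phase_commute lengths by simp
    then have "c \<cdot>\<^sub>m pauli_mat X = 0 \<cdot>\<^sub>m pauli_mat X"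
      using eq c \<open>length X = n\<close> lengths pauli_mat_carrier[of X] pauli_mat_carrier[of "pauli_prod P Q"]
      by (auto simp: length_pauli_prod intro!: eq_matI)
    with \<open>c \<noteq> 0\<close> show False using smult_pauli_mat_cancel by blast
  qed
qed

lemma supp_Diff_subset_supp_pauli_prod:
  "length P = length Q \<Longrightarrow> supp P - supp Q \<subseteq> supp (pauli_prod P Q)"
  by (auto simp: supp_def nth_pauli_prod length_pauli_prod pauli1_prod_eq_PI_iff)

lemma anticommute1_in_supp:
  "length P = length Q \<Longrightarrow> i < length P \<Longrightarrow> anticommute1 (P ! i) (Q ! i) \<Longrightarrow>
    i \<in> supp P \<inter> supp Q \<inter> supp (pauli_prod P Q)"
  by (auto simp: supp_def anticommute1_def nth_pauli_prod length_pauli_prod pauli1_prod_eq_PI_iff)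

lemma supp_Int_supp_pauli_prod_subset:
  "length P' = length Q' \<Longrightarrow> length P = length P' \<Longrightarrow> supp P \<inter> supp Q' = {} \<Longrightarrow>
    supp P \<inter> supp (pauli_prod P' Q') \<subseteq> supp P' - supp Q'"
  by (auto simp: supp_def nth_pauli_prod length_pauli_prod)

lemma supp_Int_nonempty_of_same_ptype:
  assumes len: "length P = length Q" "length P' = length Q'" "length P = length P'"
    and prod: "pauli_prod P' Q' = pauli_prod P Q"
    and i: "i < length P" "anticommute1 (P ! i) (Q ! i)"
    and type: "ptype (P, Q) = ptype (P', Q')"
  shows "supp P \<inter> supp Q' \<noteq> {}"
proof
  assume disj: "supp P \<inter> supp Q' = {}"
  have fin: "finite (supp R)" for R by (simp add: supp_def)
  have same_card: "card (supp P - supp Q) = card (supp P' - supp Q')"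
    using type card_Int_Diff[OF fin, of P "supp Q"] card_Int_Diff[OF fin, of P' "supp Q'"]
    by (simp add: ptype_def)
  \<comment> \<open>Q' vanishes on supp P, so there P' agrees with the common product of both pairs\<close>
  have "insert i (supp P - supp Q) \<subseteq> supp P \<inter> supp (pauli_prod P Q)"
    using supp_Diff_subset_supp_pauli_prod[OF len(1)] anticommute1_in_supp[OF len(1) i] by auto
  also have "\<dots> \<subseteq> supp P' - supp Q'"
    using supp_Int_supp_pauli_prod_subset[OF len(2,3) disj] prod by simp
  finally have "card (insert i (supp P - supp Q)) \<le> card (supp P' - supp Q')"
    by (intro card_mono) (simp_all add: fin)
  moreover have "i \<notin> supp P - supp Q" using anticommute1_in_supp[OF len(1) i] by auto
  ultimately show False using same_card fin by simp
qed

lemma ptype_S_X_subset: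
  assumes "X \<in> paulis n"
  shows "ptype ` S_X n k k' X \<subseteq> {1..k} \<times> {1..k}"
proof
  fix t assume "t \<in> ptype ` S_X n k k' X"
  then obtain P Q where PQ: "(P, Q) \<in> S_X n k k' X" and t: "t = ptype (P, Q)" by auto
  then have C: "(P, Q) \<in> C_inv n X" by (simp add: S_X_def)
  obtain i where "i < n" "anticommute1 (P ! i) (Q ! i)" using C_invD(4)[OF C assms] by blast
  then have "i \<in> supp P \<inter> supp Q" using anticommute1_in_supp[of P Q i] C_invD(1,2)[OF C assms] by auto
  then have "1 \<le> card (supp P \<inter> supp Q)" by (auto simp: supp_def Suc_le_eq card_gt_0_iff)
  moreover have "card (supp P \<inter> supp Q) \<le> card (supp P)" by (intro card_mono) (auto simp: supp_def)
  moreover have "card (supp P) \<le> k" using PQ by (simp add: S_X_def paulis_le_def)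
  ultimately show "t \<in> {1..k} \<times> {1..k}" by (simp add: t ptype_def)
qed

theorem lemma3p8:
  fixes n k k' :: nat and X :: "pauli1 list"
  assumes "k \<ge> 1" and "k' \<ge> 1" and "X \<in> paulis n"
  shows "card (ptype ` S_X n k k' X) \<le> k ^ 2 \<and>
    (\<forall>P Q P' Q' j l. (P, Q) \<in> S_X_type n k k' X j l \<longrightarrow> (P', Q') \<in> S_X_type n k k' X j l
           \<longrightarrow> supp P \<inter> supp Q' \<noteq> {})"
proof (intro conjI allI impI)
  have "card (ptype ` S_X n k k' X) \<le> card ({1..k} \<times> {1..k})"
    using ptype_S_X_subset[OF assms(3)] by (intro card_mono) simp_all
  then show "card (ptype ` S_X n k k' X) \<le> k ^ 2" by (simp add: power2_eq_square)
next
  fix P Q P' Q' j l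
  assume "(P, Q) \<in> S_X_type n k k' X j l" "(P', Q') \<in> S_X_type n k k' X j l"
  then have C: "(P, Q) \<in> C_inv n X" "(P', Q') \<in> C_inv n X" and "ptype (P, Q) = ptype (P', Q')"
    by (auto simp: S_X_type_def S_X_def)
  moreover obtain i where "i < n" "anticommute1 (P ! i) (Q ! i)"
    using C_invD(4)[OF C(1) assms(3)] by blast
  ultimately show "supp P \<inter> supp Q' \<noteq> {}"
    using C_invD(1-3)[OF C(1) assms(3)] C_invD(1-3)[OF C(2) assms(3)]
    by (intro supp_Int_nonempty_of_same_ptype[of P Q P' Q' i]) simp_all
qed

end
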